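(* Let $n>3$. There exist functions $\rho,p:[0,\infty[\to]0,\infty[$ with the following properties. 1. Both $\rho$ and $p$ are $C^\infty$ functions of $r^2$. 2. $\rho'(r)<0$ for $r>0$, and $\rho''(0)<0$. 3. $\rho(r)=r^{-2n/(n-1)}$ for $r>1$. 4. With $m(r)=4\pi\int_0^r s^2\rho(s)\,ds$, one has $p(r)=\int_r^\infty s^{-2}m(s)\rho(s)\,ds$. In particular $p'(r)=-\rho(r)m(r)/r^2$, i.e. $(\rho,p)$ is a static spherically symmetric solution of the Euler–Poisson system. 5. There is a smooth function $F$ on $]0,\rho(0)[$ with $F'>0$ and $p(r)=F(\rho(r))$ for all $r>0$. 6. For $0<\rho<\rho(1)$, $$F(\rho)=\frac{4\pi(n-1)^2}{2(n+1)(n-3)}\,\rho^{(n+1)/n},$$ i.e. the equation of state is polytropic of index $n$ at low densities. Moreover, $m(r)=4\pi\frac{n-1}{n-3}r^{(n-3)/(n-1)}$ for $r>1$. Hence this steady state has unbounded support ($\rho>0$ everywhere) and infinite total mass. *)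

theory Defs
  imports "HOL-Analysis.Analysis"
begin

definition smooth_on :: "real set \<Rightarrow> (real \<Rightarrow> real) \<Rightarrow> bool" where
  "smooth_on S f \<longleftrightarrow> (\<forall>k. \<forall>x\<in>S. ((deriv ^^ k) f) differentiable (at x))"

definition mass :: "(real \<Rightarrow> real) \<Rightarrow> real \<Rightarrow> real" where
  "mass rho r = 4 * pi * integral {0..r} (\<lambda>s. s^2 * rho s)"

end

theory Submission
  imports Defs "HOL-Computational_Algebra.Polynomial"
begin

text \<open>Instead of the density one prescribes the enclosed mass \<open>m(r) = r^3 mu(r^2)\<close> with
  \<open>mu(u) = K w(u)^(-\<alpha>)\<close>, \<open>\<alpha> = n/(n-1)\<close>, \<open>K = 4 \<pi> (n-1)/(n-3)\<close>, where \<open>w\<close> is a smooth, positive,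
  convex function that is the identity on \<open>[1, \<infinity>)\<close>. Then \<open>\<rho> = m'/(4 \<pi> r^2) = g(r^2)\<close> and
  \<open>p = h(r^2)\<close> with \<open>h' = - g mu / 2\<close> are smooth functions of \<open>r^2\<close> solving the Euler-Poisson
  equation, and for \<open>r \<ge> 1\<close> all quantities are explicit powers of \<open>r\<close>; this gives the mass
  formula and the polytropic law. The slope bounds of \<open>w\<close> make \<open>g\<close> positive and strictly
  decreasing on \<open>[0, \<infinity>)\<close>, so the equation of state is \<open>F = h \<circ> g\<^sup>-\<^sup>1\<close>, with \<open>F' = h'/g' > 0\<close>.\<close>

section \<open>Functions of class C^k\<close>

fun Ck_on :: "nat \<Rightarrow> real set \<Rightarrow> (real \<Rightarrow> real) \<Rightarrow> bool" where
  "Ck_on 0 S f = True"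
| "Ck_on (Suc k) S f = ((\<forall>x\<in>S. f differentiable (at x)) \<and> Ck_on k S (deriv f))"

lemma smooth_on_if_Ck_on:
  assumes "\<And>k. Ck_on k S f"
  shows "smooth_on S f"
proof -
  have "((deriv ^^ k) f) differentiable (at x)" if "Ck_on (Suc k) S f" "x \<in> S" for k f x
    using that by (induction k arbitrary: f) (auto simp: funpow_Suc_right simp del: funpow.simps)
  then show ?thesis
    using assms unfolding smooth_on_def by blast
qed

lemma Ck_on_SucD: "Ck_on (Suc k) S f \<Longrightarrow> Ck_on k S f"
  by (induction k arbitrary: f) auto

lemma Ck_on_Suc_has_derivative:
  "Ck_on (Suc k) S f \<Longrightarrow> x \<in> S \<Longrightarrow> (f has_real_derivative deriv f x) (at x)"
  by (simp add: DERIV_deriv_iff_real_differentiable)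

lemma Ck_on_imp_continuous_on: "Ck_on (Suc k) S f \<Longrightarrow> continuous_on S f"
  by (auto intro!: continuous_at_imp_continuous_on differentiable_imp_continuous_within)

lemma Ck_on_cong:
  assumes "open S" "\<And>x. x \<in> S \<Longrightarrow> f x = g x" "Ck_on k S f"
  shows "Ck_on k S g"
  using assms(2,3)
proof (induction k arbitrary: f g)
  case (Suc k)
  have near: "\<forall>\<^sub>F y in nhds x. f y = g y" if "x \<in> S" for x
    using assms(1) that Suc.prems(1) eventually_nhds by blast
  have "(g has_real_derivative deriv f x) (at x)" if "x \<in> S" for x
    using Ck_on_Suc_has_derivative[OF Suc.prems(2) that] DERIV_cong_ev[OF refl near[OF that] refl]
    by simp
  moreover have "Ck_on k S (deriv g)"
    using Suc.IH[of "deriv f"] Suc.prems deriv_cong_ev[OF near] by auto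
  ultimately show ?case
    by (auto simp: real_differentiable_def)
qed simp

lemma Ck_on_SucI:
  assumes "open S" "\<And>x. x \<in> S \<Longrightarrow> (f has_real_derivative f' x) (at x)" "Ck_on k S f'"
  shows "Ck_on (Suc k) S f"
proof -
  have "Ck_on k S (deriv f)"
    using assms by (intro Ck_on_cong[OF assms(1) _ assms(3)]) (metis DERIV_imp_deriv)
  then show ?thesis
    using assms(2) by (auto simp: real_differentiable_def)
qed

lemma Ck_on_const: "Ck_on k S (\<lambda>x. c)"
  by (induction k arbitrary: c) (auto simp: deriv_const)

lemma Ck_on_ident: "Ck_on k S (\<lambda>x. x)"
  by (cases k) (auto simp: Ck_on_const)

lemma Ck_on_add:
  "open S \<Longrightarrow> Ck_on k S f \<Longrightarrow> Ck_on k S g \<Longrightarrow> Ck_on k S (\<lambda>x. f x + g x)"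
proof (induction k arbitrary: f g)
  case (Suc k)
  show ?case
    using Suc by (intro Ck_on_SucI[where f'="\<lambda>x. deriv f x + deriv g x"])
      (auto intro!: DERIV_add Ck_on_Suc_has_derivative)
qed simp

lemma Ck_on_mult:
  "open S \<Longrightarrow> Ck_on k S f \<Longrightarrow> Ck_on k S g \<Longrightarrow> Ck_on k S (\<lambda>x. f x * g x)"
proof (induction k arbitrary: f g)
  case (Suc k)
  have "Ck_on k S f" "Ck_on k S g"
    using Suc.prems Ck_on_SucD by blast+
  then have "Ck_on k S (\<lambda>x. f x * deriv g x + deriv f x * g x)"
    using Suc by (intro Ck_on_add) auto
  then show ?case
    using Suc.prems
    by (intro Ck_on_SucI[where f'="\<lambda>x. f x * deriv g x + deriv f x * g x"])
      (auto intro!: derivative_eq_intros Ck_on_Suc_has_derivative)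
qed simp

lemma Ck_on_cmult: "open S \<Longrightarrow> Ck_on k S f \<Longrightarrow> Ck_on k S (\<lambda>x. c * f x)"
  using Ck_on_mult[OF _ Ck_on_const] by blast

lemma Ck_on_diff: "open S \<Longrightarrow> Ck_on k S f \<Longrightarrow> Ck_on k S g \<Longrightarrow> Ck_on k S (\<lambda>x. f x - g x)"
  using Ck_on_add[of S k f "\<lambda>x. (-1) * g x"] Ck_on_cmult[of S k g "-1"] by simp

lemma Ck_on_compose:
  assumes "open S" "open T" "Ck_on k T f" "Ck_on k S g" "g ` S \<subseteq> T"
  shows "Ck_on k S (\<lambda>x. f (g x))"
  using assms(3-5)
proof (induction k arbitrary: f g)
  case (Suc k)
  have "Ck_on k S (\<lambda>x. deriv f (g x))"
    using Suc Ck_on_SucD[of k S g] by auto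
  then have "Ck_on k S (\<lambda>x. deriv f (g x) * deriv g x)"
    using Suc.prems assms(1) by (intro Ck_on_mult) auto
  moreover have "((\<lambda>x. f (g x)) has_real_derivative deriv f (g x) * deriv g x) (at x)"
    if "x \<in> S" for x
    using Suc.prems that
    by (intro DERIV_chain2[where f=f] Ck_on_Suc_has_derivative[where S=T]
        Ck_on_Suc_has_derivative[where S=S]) auto
  ultimately show ?case
    using assms(1) by (intro Ck_on_SucI) auto
qed simp

lemma Ck_on_inverse_ident: "Ck_on k (-{0}) (\<lambda>x. inverse x)"
proof (induction k)
  case (Suc k)
  have "Ck_on k (-{0}) (\<lambda>x. - inverse x * inverse x)"
    using Ck_on_mult[OF _ Ck_on_cmult[OF _ Suc] Suc, of "-1"] by auto
  then show ?case
    by (intro Ck_on_SucI[where f'="\<lambda>x. - inverse x * inverse x"])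
      (auto intro!: derivative_eq_intros simp: power2_eq_square)
qed simp

lemma Ck_on_inverse:
  "open S \<Longrightarrow> Ck_on k S f \<Longrightarrow> (\<And>x. x \<in> S \<Longrightarrow> f x \<noteq> 0) \<Longrightarrow> Ck_on k S (\<lambda>x. inverse (f x))"
  by (rule Ck_on_compose[OF _ _ Ck_on_inverse_ident]) auto

lemma Ck_on_powr: "Ck_on k {0<..} (\<lambda>x. x powr c)"
proof (induction k arbitrary: c)
  case (Suc k)
  show ?case
    using Ck_on_cmult[OF _ Suc]
    by (intro Ck_on_SucI[where f'="\<lambda>x. c * x powr (c - 1)"]) (auto intro!: derivative_eq_intros)
qed simp

section \<open>A smooth step function\<close>

text \<open>The functions \<open>q(1/x) exp(-1/x)\<close>, extended by 0 to \<open>x \<le> 0\<close>, form a family closed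
  under differentiation; this is what makes \<open>exp(-1/x)\<close> smooth at 0.\<close>

definition exp_flat :: "real poly \<Rightarrow> real \<Rightarrow> real" where
  "exp_flat q x = (if x > 0 then poly q (1 / x) * exp (- 1 / x) else 0)"

definition exp_flat_dpoly :: "real poly \<Rightarrow> real poly" where
  "exp_flat_dpoly q = [:0, 0, 1:] * (q - pderiv q)"

lemma poly_mult_div_exp_tendsto_0: "((\<lambda>y. poly q y * y / exp y) \<longlongrightarrow> (0::real)) at_top"
proof -
  have "poly q y * y / exp y = (\<Sum>i\<le>degree q. coeff q i * y ^ i * y / exp y)" for y :: real
    by (simp add: poly_altdef sum_distrib_right sum_divide_distrib)
  also have "\<dots> y = (\<Sum>i\<le>degree q. coeff q i * (y ^ Suc i / exp y))" for y :: real
    by (simp add: mult_ac)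
  moreover have "((\<lambda>y. \<Sum>i\<le>degree q. coeff q i * (y ^ Suc i / exp y)) \<longlongrightarrow> 0) at_top"
    by (intro tendsto_null_sum tendsto_mult_right_zero tendsto_power_div_exp_0)
  ultimately show ?thesis
    by simp
qed

lemma exp_flat_has_derivative: "(exp_flat q has_real_derivative exp_flat (exp_flat_dpoly q) x) (at x)"
proof (cases x "0::real" rule: linorder_cases)
  case greater
  have "((\<lambda>x. poly q (1 / x)) has_real_derivative poly (pderiv q) (1 / x) * (- 1 / x^2)) (at x)"
    by (rule DERIV_chain2[OF poly_DERIV])
      (use greater in \<open>auto intro!: derivative_eq_intros simp: power2_eq_square\<close>)
  moreover have "((\<lambda>x. exp (- 1 / x)) has_real_derivative exp (- 1 / x) * (1 / x^2)) (at x)"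
    using greater by (auto intro!: derivative_eq_intros simp: power2_eq_square field_simps)
  ultimately have "((\<lambda>x. poly q (1 / x) * exp (- 1 / x)) has_real_derivative
      poly (pderiv q) (1 / x) * (- 1 / x^2) * exp (- 1 / x) + exp (- 1 / x) * (1 / x^2) * poly q (1 / x)) (at x)"
    by (rule DERIV_mult)
  then have "((\<lambda>x. poly q (1 / x) * exp (- 1 / x)) has_real_derivative exp_flat (exp_flat_dpoly q) x) (at x)"
    using greater by (simp add: exp_flat_def exp_flat_dpoly_def algebra_simps power2_eq_square)
  then show ?thesis
    by (rule has_field_derivative_transform_within_open[where S="{0<..}"])
      (use greater in \<open>auto simp: exp_flat_def\<close>)
next
  case less
  have "((\<lambda>x. 0) has_real_derivative exp_flat (exp_flat_dpoly q) x) (at x)"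
    using less by (simp add: exp_flat_def)
  then show ?thesis
    by (rule has_field_derivative_transform_within_open[where S="{..<0}"])
      (use less in \<open>auto simp: exp_flat_def\<close>)
next
  case equal
  have "((\<lambda>y. (exp_flat q y - exp_flat q 0) / (y - 0)) \<longlongrightarrow> 0) (at 0)"
    unfolding filterlim_at_split
  proof
    have "\<forall>\<^sub>F y in at_left 0. 0 = (exp_flat q y - exp_flat q 0) / (y - 0)"
      by (auto simp: exp_flat_def eventually_at_left_real[of "-1" 0]
          intro: eventually_mono[OF eventually_at_left_real[of "-1" 0]])
    then show "((\<lambda>y. (exp_flat q y - exp_flat q 0) / (y - 0)) \<longlongrightarrow> 0) (at_left 0)"
      by (rule Lim_transform_eventually[OF tendsto_const])
  next
    have "\<forall>\<^sub>F y in at_top. poly q y * y / exp y = (exp_flat q (inverse y) - exp_flat q 0) / (inverse y - 0)"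
      using eventually_gt_at_top[of 0] by eventually_elim (simp add: exp_flat_def exp_minus field_simps)
    then have "((\<lambda>y. (exp_flat q (inverse y) - exp_flat q 0) / (inverse y - 0)) \<longlongrightarrow> 0) at_top"
      by (rule Lim_transform_eventually[OF poly_mult_div_exp_tendsto_0])
    then show "((\<lambda>y. (exp_flat q y - exp_flat q 0) / (y - 0)) \<longlongrightarrow> 0) (at_right 0)"
      unfolding filterlim_at_right_to_top by simp
  qed
  then show ?thesis
    using equal by (simp add: has_field_derivative_iff exp_flat_def)
qed

lemma Ck_on_exp_flat: "Ck_on k UNIV (exp_flat q)"
proof (induction k arbitrary: q)
  case (Suc k)
  show ?case
    by (rule Ck_on_SucI[OF _ exp_flat_has_derivative]) (use Suc in simp_all)
qed simp

lemma exp_flat_1: "exp_flat 1 x = (if x > 0 then exp (- 1 / x) else 0)"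
  by (simp add: exp_flat_def)

lemma exp_flat_1_has_derivative:
  "(exp_flat 1 has_real_derivative (if x > 0 then (1 / x)^2 * exp (- 1 / x) else 0)) (at x)"
proof -
  have "exp_flat (exp_flat_dpoly 1) x = (if x > 0 then (1 / x)^2 * exp (- 1 / x) else 0)"
    by (simp add: exp_flat_def exp_flat_dpoly_def power2_eq_square)
  then show ?thesis
    using exp_flat_has_derivative[of 1 x] by simp
qed

definition smooth_step :: "real \<Rightarrow> real" where
  "smooth_step x = exp_flat 1 x / (exp_flat 1 x + exp_flat 1 (1 - x))"

lemma smooth_step_denominator_pos: "exp_flat 1 x + exp_flat 1 (1 - x) > 0"
  by (simp add: exp_flat_1 add_pos_nonneg add_nonneg_pos)

lemma smooth_step_eq_0: "x \<le> 0 \<Longrightarrow> smooth_step x = 0"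
  by (simp add: smooth_step_def exp_flat_1)

lemma smooth_step_eq_1: "x \<ge> 1 \<Longrightarrow> smooth_step x = 1"
  by (simp add: smooth_step_def exp_flat_1)

lemma smooth_step_nonneg: "smooth_step x \<ge> 0"
  using smooth_step_denominator_pos[of x] by (simp add: smooth_step_def exp_flat_1)

lemma smooth_step_le_1: "smooth_step x \<le> 1"
  using smooth_step_denominator_pos[of x] by (simp add: smooth_step_def exp_flat_1)

lemma Ck_on_smooth_step: "Ck_on k UNIV smooth_step"
proof -
  have "Ck_on k UNIV (\<lambda>x. exp_flat 1 (1 - x))"
    by (rule Ck_on_compose[OF _ _ Ck_on_exp_flat]) (auto intro: Ck_on_diff Ck_on_const Ck_on_ident)
  then have "Ck_on k UNIV (\<lambda>x. exp_flat 1 x * inverse (exp_flat 1 x + exp_flat 1 (1 - x)))"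
    using smooth_step_denominator_pos
    by (intro Ck_on_mult Ck_on_inverse Ck_on_add Ck_on_exp_flat) (auto simp: less_le)
  then show ?thesis
    by (simp add: smooth_step_def[abs_def] divide_inverse)
qed

lemma smooth_step_has_derivative: "(smooth_step has_real_derivative deriv smooth_step x) (at x)"
  using Ck_on_smooth_step[of 1] by (auto simp: DERIV_deriv_iff_real_differentiable)

lemma deriv_smooth_step_nonneg: "deriv smooth_step x \<ge> 0"
proof -
  define e where "e = exp_flat 1"
  define d where "d x = (if x > 0 then (1 / x)^2 * exp (- 1 / x) else 0)" for x :: real
  have e_deriv: "(e has_real_derivative d x) (at x)" for x
    unfolding e_def d_def by (rule exp_flat_1_has_derivative)
  have "((\<lambda>x. e (1 - x)) has_real_derivative d (1 - x) * (- 1)) (at x)"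
    by (rule DERIV_chain2[OF e_deriv]) (auto intro!: derivative_eq_intros)
  then have "((\<lambda>x. e x / (e x + e (1 - x))) has_real_derivative
      (d x * (e x + e (1 - x)) - e x * (d x + d (1 - x) * (- 1))) / ((e x + e (1 - x)) * (e x + e (1 - x))))
      (at x)"
    using smooth_step_denominator_pos[of x] unfolding e_def[symmetric]
    by (intro DERIV_divide DERIV_add e_deriv) auto
  then have "(smooth_step has_real_derivative
      (d x * e (1 - x) + e x * d (1 - x)) / (e x + e (1 - x))^2) (at x)"
    unfolding smooth_step_def[abs_def] e_def[symmetric] by (simp add: power2_eq_square algebra_simps)
  moreover have "(d x * e (1 - x) + e x * d (1 - x)) / (e x + e (1 - x))^2 \<ge> 0"
    by (simp add: d_def e_def exp_flat_1)
  ultimately show ?thesis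
    using DERIV_imp_deriv by metis
qed

lemma continuous_on_UNIV_has_antiderivative:
  fixes f :: "real \<Rightarrow> real"
  assumes "continuous_on UNIV f"
  shows "\<exists>F. (\<forall>x. (F has_real_derivative f x) (at x)) \<and> F a = c"
proof -
  define F0 where "F0 x = integral {0..x} f - integral {x..0} f" for x
  have "(F0 has_real_derivative f x) (at x)" for x
  proof -
    define b where "b = \<bar>x\<bar> + 1"
    have b: "- b < x" "x < b" "0 < b"
      unfolding b_def by auto
    have int: "f integrable_on {- b..b}"
      using assms continuous_on_subset integrable_continuous_real by blast
    have F0_eq: "F0 t = integral {- b..t} f - integral {- b..0} f" if "t \<in> {- b<..<b}" for t
    proof (cases "t \<ge> 0")
      case True
      then have "integral {- b..0} f + integral {0..t} f = integral {- b..t} f"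
        using that b by (intro Henstock_Kurzweil_Integration.integral_combine integrable_on_subinterval[OF int]) auto
      then show ?thesis
        using True by (cases "t = 0") (auto simp: F0_def)
    next
      case False
      then have "integral {- b..t} f + integral {t..0} f = integral {- b..0} f"
        using that b by (intro Henstock_Kurzweil_Integration.integral_combine integrable_on_subinterval[OF int]) auto
      then show ?thesis
        using False by (simp add: F0_def)
    qed
    have "((\<lambda>t. integral {- b..t} f) has_real_derivative f x) (at x within {- b..b})"
      using assms b by (intro integral_has_real_derivative) (auto intro: continuous_on_subset)
    then have "((\<lambda>t. integral {- b..t} f - integral {- b..0} f) has_real_derivative f x) (at x)"
      using at_within_Icc_at[OF b(1,2)] by (auto intro!: derivative_eq_intros)
    then show ?thesis
      by (rule has_field_derivative_transform_within_open[where S="{- b<..<b}"]) (use b F0_eq in auto)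
  qed
  then show ?thesis
    by (intro exI[of _ "\<lambda>x. F0 x - F0 a + c"]) (auto intro!: derivative_eq_intros)
qed

definition antiderivative_through :: "(real \<Rightarrow> real) \<Rightarrow> real \<Rightarrow> real \<Rightarrow> real \<Rightarrow> real" where
  "antiderivative_through f a c = (SOME F. (\<forall>x. (F has_real_derivative f x) (at x)) \<and> F a = c)"

lemma
  assumes "continuous_on UNIV f"
  shows antiderivative_through_has_derivative:
      "(antiderivative_through f a c has_real_derivative f x) (at x)"
    and antiderivative_through_at: "antiderivative_through f a c a = c"
  using someI_ex[OF continuous_on_UNIV_has_antiderivative[OF assms]]
  unfolding antiderivative_through_def by blast+

lemma Ck_on_antiderivative_through:
  "continuous_on UNIV f \<Longrightarrow> Ck_on k UNIV f \<Longrightarrow> Ck_on (Suc k) UNIV (antiderivative_through f a c)"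
  by (rule Ck_on_SucI[OF _ antiderivative_through_has_derivative]) auto

lemma increment_le_if_deriv_le:
  fixes f :: "real \<Rightarrow> real"
  assumes "a \<le> b"
    and "\<And>x. a \<le> x \<Longrightarrow> x \<le> b \<Longrightarrow> (f has_real_derivative f' x) (at x)"
    and "\<And>x. a \<le> x \<Longrightarrow> x \<le> b \<Longrightarrow> f' x \<le> B"
  shows "f b - f a \<le> (b - a) * B"
proof -
  have "f b - B * b \<le> f a - B * a"
    using assms
    by (intro DERIV_nonpos_imp_nonincreasing[of a b "\<lambda>x. f x - B * x"])
      (auto intro!: exI derivative_eq_intros)
  then show ?thesis
    by (simp add: algebra_simps)
qed

lemma eq_on_atLeast_if_same_derivative:
  fixes f g :: "real \<Rightarrow> real"
  assumes "\<And>x. a \<le> x \<Longrightarrow> (f has_real_derivative d x) (at x)"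
    and "\<And>x. a \<le> x \<Longrightarrow> (g has_real_derivative d x) (at x)"
    and "f a = g a" "a \<le> x"
  shows "f x = g x"
proof -
  have "((\<lambda>x. f x - g x) has_real_derivative 0) (at y)"
    and "((\<lambda>x. g x - f x) has_real_derivative 0) (at y)" if "a \<le> y" for y
    using DERIV_diff[OF assms(1,2)[OF that]] DERIV_diff[OF assms(2,1)[OF that]] by simp_all
  then have "(f x - g x) - (f a - g a) \<le> (x - a) * 0" "(g x - f x) - (g a - f a) \<le> (x - a) * 0"
    using assms(4) by (intro increment_le_if_deriv_le[where f'="\<lambda>_. 0"]; simp)+
  then show ?thesis
    using assms(3) by simp
qed

lemma powr_drop_factor: "x > 0 \<Longrightarrow> x powr (c - 1) = x powr (c - 2) * x" for x :: real
  using powr_mult_base[of x "c - 2"] by (simp add: mult.commute)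

lemma powr_drop_two_factors: "x > 0 \<Longrightarrow> x powr c = x powr (c - 2) * x * x" for x :: real
  using powr_drop_factor[of x "c + 1"] powr_drop_factor[of x c] by simp

lemma fundamental_theorem_of_calculus_real:
  assumes "a \<le> b" "\<And>x. a \<le> x \<Longrightarrow> x \<le> b \<Longrightarrow> (f has_real_derivative f' x) (at x)"
  shows "(f' has_integral (f b - f a)) {a..b}"
  using assms
  by (intro fundamental_theorem_of_calculus)
    (auto simp: has_real_derivative_iff_has_vector_derivative[symmetric] intro: has_field_derivative_at_within)

lemma powr_tendsto_at_top: "c > 0 \<Longrightarrow> filterlim (\<lambda>x::real. x powr c) at_top at_top"
proof -
  assume c: "c > 0"
  have "filterlim (\<lambda>x. exp (c * ln x)) at_top at_top"
    by (rule filterlim_compose[OF exp_at_top filterlim_tendsto_pos_mult_at_top[OF tendsto_const c ln_at_top]])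
  moreover have "\<forall>\<^sub>F x in at_top. exp (c * ln x) = x powr c"
    using eventually_gt_at_top[of 0] by eventually_elim (simp add: powr_def)
  ultimately show ?thesis
    by (rule filterlim_cong[OF refl refl, THEN iffD1, rotated])
qed

lemma power2_powr: "r \<ge> 0 \<Longrightarrow> (r^2) powr c = r powr (2 * c)" for r :: real
  by (simp flip: powr_powr)

section \<open>A convex regularisation of the identity\<close>

text \<open>The slope \<open>dw\<close> of \<open>w\<close> vanishes below \<open>-1/4\<close>, equals \<open>1/2\<close> on \<open>[0, 1/2]\<close> and 1 above 1,
  so \<open>w\<close> is convex, positive, and the identity on \<open>[1, \<infinity>)\<close>.\<close>

definition dw :: "real \<Rightarrow> real" where
  "dw u = smooth_step (4 * u + 1) / 2 + smooth_step (2 * u - 1) / 2"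

definition ddw :: "real \<Rightarrow> real" where
  "ddw u = 2 * deriv smooth_step (4 * u + 1) + deriv smooth_step (2 * u - 1)"

definition w :: "real \<Rightarrow> real" where
  "w = antiderivative_through dw 1 1"

lemma dw_has_derivative: "(dw has_real_derivative ddw u) (at u)"
proof -
  have "((\<lambda>u. smooth_step (4 * u + 1) / 2 + smooth_step (2 * u - 1) / 2) has_real_derivative
      deriv smooth_step (4 * u + 1) * 4 / 2 + deriv smooth_step (2 * u - 1) * 2 / 2) (at u)"
    by (intro DERIV_add DERIV_cdivide DERIV_chain2[OF smooth_step_has_derivative])
      (auto intro!: derivative_eq_intros)
  then show ?thesis
    by (simp add: dw_def[abs_def] ddw_def)
qed

lemma Ck_on_dw: "Ck_on k UNIV dw"
proof -
  have "Ck_on k UNIV (\<lambda>u. smooth_step (4 * u + 1))" "Ck_on k UNIV (\<lambda>u. smooth_step (2 * u - 1))"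
    by (rule Ck_on_compose[OF _ _ Ck_on_smooth_step];
        auto intro!: Ck_on_add Ck_on_diff Ck_on_cmult Ck_on_const Ck_on_ident)+
  then have "Ck_on k UNIV (\<lambda>u. 1/2 * smooth_step (4 * u + 1) + 1/2 * smooth_step (2 * u - 1))"
    by (intro Ck_on_add Ck_on_cmult) auto
  then show ?thesis
    by (simp add: dw_def[abs_def])
qed

lemma continuous_on_dw: "continuous_on UNIV dw"
  using Ck_on_imp_continuous_on[OF Ck_on_dw[of "Suc 0"]] .

lemma w_has_derivative: "(w has_real_derivative dw u) (at u)"
  unfolding w_def by (rule antiderivative_through_has_derivative[OF continuous_on_dw])

lemma w_1: "w 1 = 1"
  unfolding w_def by (rule antiderivative_through_at[OF continuous_on_dw])

lemma Ck_on_w: "Ck_on k UNIV w"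
proof (cases k)
  case (Suc j)
  then show ?thesis
    unfolding w_def by (simp only: Ck_on_antiderivative_through[OF continuous_on_dw Ck_on_dw])
qed simp

lemma dw_nonneg: "dw u \<ge> 0"
  using smooth_step_nonneg by (simp add: dw_def)

lemma dw_le_1: "dw u \<le> 1"
  using smooth_step_le_1[of "4 * u + 1"] smooth_step_le_1[of "2 * u - 1"] by (simp add: dw_def)

lemma dw_eq_1: "u \<ge> 1 \<Longrightarrow> dw u = 1"
  by (simp add: dw_def smooth_step_eq_1)

lemma dw_ge_half: "u \<ge> 0 \<Longrightarrow> dw u \<ge> 1/2"
  using smooth_step_nonneg[of "2 * u - 1"] by (simp add: dw_def smooth_step_eq_1)

lemma dw_le_half: "u \<le> 1/2 \<Longrightarrow> dw u \<le> 1/2"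
  using smooth_step_le_1[of "4 * u + 1"] by (simp add: dw_def smooth_step_eq_0)

lemma dw_eq_0: "u \<le> - 1/4 \<Longrightarrow> dw u = 0"
  by (simp add: dw_def smooth_step_eq_0)

lemma ddw_nonneg: "ddw u \<ge> 0"
  using deriv_smooth_step_nonneg by (simp add: ddw_def add_nonneg_nonneg)

lemma w_eq_ident: "u \<ge> 1 \<Longrightarrow> w u = u"
  by (rule eq_on_atLeast_if_same_derivative[where d=dw and a=1, OF w_has_derivative])
    (auto simp: w_1 dw_eq_1)

lemma ident_le_w: "u \<le> w u"
proof (cases "u \<le> 1")
  case True
  have "w 1 - w u \<le> (1 - u) * 1"
    using True by (intro increment_le_if_deriv_le[where f'=dw] w_has_derivative dw_le_1)
  then show ?thesis
    by (simp add: w_1)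
qed (simp add: w_eq_ident)

lemma w_mono: "a \<le> b \<Longrightarrow> w a \<le> w b"
  using DERIV_nonneg_imp_nondecreasing[of a b w] w_has_derivative dw_nonneg by blast

lemma w_pos: "w u > 0"
proof -
  have "w (1/2) - w (- 1/4) \<le> (1/2 - (- 1/4)) * (1/2)"
    by (intro increment_le_if_deriv_le[where f'=dw] w_has_derivative dw_le_half) auto
  with ident_le_w[of "1/2"] have w_quarter: "w (- 1/4) \<ge> 1/8"
    by simp
  show ?thesis
  proof (cases "u \<ge> - 1/4")
    case True
    then show ?thesis
      using w_mono[OF True] w_quarter by simp
  next
    case False
    then have "w (- 1/4) - w u \<le> (- 1/4 - u) * 0"
      by (intro increment_le_if_deriv_le[where f'=dw] w_has_derivative) (auto simp: dw_eq_0)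
    then show ?thesis
      using w_quarter by simp
  qed
qed

lemma u_dw_le_w: "u \<ge> 0 \<Longrightarrow> u * dw u \<le> w u"
  using mult_left_mono[OF dw_le_1[of u], of u] ident_le_w[of u] by simp

lemma w_powr_has_derivative:
  "((\<lambda>u. w u powr c) has_real_derivative c * w u powr (c - 1) * dw u) (at u)"
  using DERIV_fun_powr[OF w_has_derivative w_pos] by simp

section \<open>The steady state\<close>

locale polytrope =
  fixes n :: real
  assumes n_gt_3: "n > 3"
begin

definition \<alpha> :: real where "\<alpha> = n / (n - 1)"

definition K :: real where "K = 4 * pi * (n - 1) / (n - 3)"

lemma alpha_gt_1: "\<alpha> > 1" and alpha_less_3_2: "\<alpha> < 3/2"
  using n_gt_3 by (simp_all add: \<alpha>_def field_simps)

lemma K_pos: "K > 0"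
  using n_gt_3 by (simp add: K_def)

lemma K_alpha: "(3 - 2 * \<alpha>) * K = 4 * pi"
proof -
  have "3 - 2 * \<alpha> = (n - 3) / (n - 1)"
    using n_gt_3 by (simp add: \<alpha>_def field_simps)
  then show ?thesis
    using n_gt_3 by (simp add: K_def)
qed

definition mu :: "real \<Rightarrow> real" where
  "mu u = K * w u powr (- \<alpha>)"

definition dmu :: "real \<Rightarrow> real" where
  "dmu u = - \<alpha> * K * w u powr (- \<alpha> - 1) * dw u"

definition ddmu :: "real \<Rightarrow> real" where
  "ddmu u = \<alpha> * (\<alpha> + 1) * K * w u powr (- \<alpha> - 2) * (dw u)^2 - \<alpha> * K * w u powr (- \<alpha> - 1) * ddw u"

definition g :: "real \<Rightarrow> real" where
  "g u = (3 * mu u + 2 * u * dmu u) / (4 * pi)"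

definition dg :: "real \<Rightarrow> real" where
  "dg u = (5 * dmu u + 2 * u * ddmu u) / (4 * pi)"

lemma mu_has_derivative: "(mu has_real_derivative dmu u) (at u)"
  unfolding mu_def[abs_def] dmu_def
  using DERIV_cmult[OF w_powr_has_derivative, of K "- \<alpha>" u] by (simp add: algebra_simps)

lemma dmu_has_derivative: "(dmu has_real_derivative ddmu u) (at u)"
  unfolding dmu_def[abs_def] ddmu_def
  using DERIV_mult[OF DERIV_cmult[OF w_powr_has_derivative] dw_has_derivative, of "- \<alpha> * K" "- \<alpha> - 1" u]
  by (simp add: algebra_simps power2_eq_square)

lemma g_has_derivative: "(g has_real_derivative dg u) (at u)"
proof -
  have "((\<lambda>u. (3 * mu u + 2 * u * dmu u) / (4 * pi)) has_real_derivative
      (3 * dmu u + (2 * dmu u + ddmu u * (2 * u))) / (4 * pi)) (at u)"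
    by (intro DERIV_cdivide DERIV_add DERIV_cmult DERIV_mult mu_has_derivative dmu_has_derivative)
      (auto intro!: derivative_eq_intros)
  then show ?thesis
    by (simp add: g_def[abs_def] dg_def algebra_simps)
qed

lemma Ck_on_g: "Ck_on k UNIV g"
proof -
  have "Ck_on k UNIV (\<lambda>u. w u powr c)" for c
    by (rule Ck_on_compose[OF _ _ Ck_on_powr Ck_on_w]) (use w_pos in auto)
  then have "Ck_on k UNIV (\<lambda>u. 1 / (4 * pi) * (3 * (K * w u powr (- \<alpha>)) +
      2 * (u * (- \<alpha> * K * w u powr (- \<alpha> - 1) * dw u))))"
    by (intro Ck_on_cmult Ck_on_add Ck_on_mult Ck_on_ident Ck_on_dw) auto
  then show ?thesis
    by (simp add: g_def[abs_def] mu_def dmu_def field_simps)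
qed

lemma deriv_g: "deriv g = dg"
  using g_has_derivative DERIV_imp_deriv by blast

lemma g_factor: "4 * pi * g u = K * w u powr (- \<alpha> - 2) * w u * (3 * w u - 2 * \<alpha> * u * dw u)"
  unfolding g_def mu_def dmu_def powr_drop_factor[OF w_pos] powr_drop_two_factors[OF w_pos, of _ "- \<alpha>"]
  by (simp add: field_simps)

lemma dg_factor:
  "4 * pi * dg u = \<alpha> * K * w u powr (- \<alpha> - 2) *
     (2 * (\<alpha> + 1) * u * (dw u)^2 - 5 * w u * dw u - 2 * u * w u * ddw u)"
  unfolding dg_def dmu_def ddmu_def powr_drop_factor[OF w_pos]
  by (simp add: field_simps power2_eq_square)

lemma mu_pos: "mu u > 0"
  using K_pos w_pos[of u] by (simp add: mu_def)

lemma g_pos: "u \<ge> 0 \<Longrightarrow> g u > 0"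
proof -
  assume u: "u \<ge> 0"
  have "2 * \<alpha> * (u * dw u) \<le> 2 * \<alpha> * w u"
    using u_dw_le_w[OF u] alpha_gt_1 by (intro mult_left_mono) auto
  moreover have "2 * \<alpha> * w u < 3 * w u"
    using alpha_less_3_2 w_pos[of u] by simp
  ultimately have "3 * w u - 2 * \<alpha> * u * dw u > 0"
    by (simp add: algebra_simps)
  then have "4 * pi * g u > 0"
    unfolding g_factor using K_pos w_pos[of u] by simp
  then show ?thesis
    by (simp add: zero_less_mult_iff)
qed

text \<open>Here convexity of \<open>w\<close> and the bounds \<open>u dw u \<le> w u\<close>, \<open>dw u \<ge> 1/2\<close>, \<open>\<alpha> < 3/2\<close> enter.\<close>

lemma dg_neg: "u \<ge> 0 \<Longrightarrow> dg u < 0"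
proof -
  assume u: "u \<ge> 0"
  have "2 * (\<alpha> + 1) * (u * (dw u)^2) \<le> 2 * (\<alpha> + 1) * (w u * dw u)"
    using mult_right_mono[OF u_dw_le_w[OF u] dw_nonneg[of u]] alpha_gt_1
    by (intro mult_left_mono) (auto simp: power2_eq_square mult.assoc)
  moreover have "(2 * (\<alpha> + 1) - 5) * (w u * dw u) < 0"
    using w_pos[of u] dw_ge_half[OF u] alpha_less_3_2 by (intro mult_neg_pos) auto
  moreover have "u * w u * ddw u \<ge> 0"
    using u w_pos[of u] ddw_nonneg[of u] by simp
  ultimately have "2 * (\<alpha> + 1) * u * (dw u)^2 - 5 * w u * dw u - 2 * u * w u * ddw u < 0"
    by (simp add: algebra_simps)
  moreover have "\<alpha> * K * w u powr (- \<alpha> - 2) > 0"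
    using K_pos alpha_gt_1 w_pos[of u] by simp
  ultimately have "4 * pi * dg u < 0"
    unfolding dg_factor by (simp add: mult_pos_neg)
  then show ?thesis
    by (simp add: mult_less_0_iff)
qed

lemma mu_eq_powr: "u \<ge> 1 \<Longrightarrow> mu u = K * u powr (- \<alpha>)"
  by (simp add: mu_def w_eq_ident)

lemma g_eq_powr: "u \<ge> 1 \<Longrightarrow> g u = u powr (- \<alpha>)"
proof -
  assume u: "u \<ge> 1"
  have "4 * pi * g u = (3 - 2 * \<alpha>) * K * (u powr (- \<alpha> - 2) * u * u)"
    unfolding g_factor using u by (simp add: w_eq_ident dw_eq_1 algebra_simps)
  also have "u powr (- \<alpha> - 2) * u * u = u powr (- \<alpha>)"
    using powr_drop_two_factors[of u "- \<alpha>"] u by simp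
  finally show ?thesis
    using K_alpha by simp
qed

definition dh :: "real \<Rightarrow> real" where
  "dh u = - g u * mu u / 2"

text \<open>The constant makes \<open>h u = K / (2 (2 \<alpha> - 1)) u^(1 - 2 \<alpha>)\<close> for \<open>u \<ge> 1\<close>, so that the
  pressure vanishes at infinity.\<close>

definition h :: "real \<Rightarrow> real" where
  "h = antiderivative_through dh 1 (K / (2 * (2 * \<alpha> - 1)))"

lemma Ck_on_mu: "Ck_on k UNIV mu"
  unfolding mu_def[abs_def]
  by (intro Ck_on_cmult Ck_on_compose[OF _ _ Ck_on_powr Ck_on_w]) (use w_pos in auto)

lemma Ck_on_dh: "Ck_on k UNIV dh"
  unfolding dh_def[abs_def]
  using Ck_on_cmult[OF _ Ck_on_mult[OF _ Ck_on_g Ck_on_mu], where c="- 1/2"] by simp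

lemma continuous_on_dh: "continuous_on UNIV dh"
  using Ck_on_imp_continuous_on[OF Ck_on_dh[of "Suc 0"]] .

lemma h_has_derivative: "(h has_real_derivative dh u) (at u)"
  unfolding h_def by (rule antiderivative_through_has_derivative[OF continuous_on_dh])

lemma Ck_on_h: "Ck_on k UNIV h"
proof (cases k)
  case (Suc j)
  then show ?thesis
    unfolding h_def by (simp only: Ck_on_antiderivative_through[OF continuous_on_dh Ck_on_dh])
qed simp

lemma h_eq_powr: "u \<ge> 1 \<Longrightarrow> h u = K / (2 * (2 * \<alpha> - 1)) * u powr (1 - 2 * \<alpha>)"
proof (rule eq_on_atLeast_if_same_derivative[where a=1 and d=dh, OF h_has_derivative])
  fix x :: real
  assume x: "1 \<le> x"
  have "dh x = - K * (x powr (- \<alpha>) * x powr (- \<alpha>)) / 2"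
    using x by (simp add: dh_def g_eq_powr mu_eq_powr)
  also have "\<dots> = K / (2 * (2 * \<alpha> - 1)) * ((1 - 2 * \<alpha>) * x powr (1 - 2 * \<alpha> - 1))"
    using alpha_gt_1 by (simp add: powr_add[symmetric] field_simps)
  finally show "((\<lambda>u. K / (2 * (2 * \<alpha> - 1)) * u powr (1 - 2 * \<alpha>)) has_real_derivative dh x) (at x)"
    using x alpha_gt_1 by (auto intro!: derivative_eq_intros)
qed (simp_all add: h_def antiderivative_through_at[OF continuous_on_dh])

lemma dh_neg: "u \<ge> 0 \<Longrightarrow> dh u < 0"
  using g_pos mu_pos by (simp add: dh_def)

lemma h_pos: "u \<ge> 0 \<Longrightarrow> h u > 0"
proof -
  assume u: "u \<ge> 0"
  have h_1: "h 1 > 0"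
    using h_eq_powr[of 1] K_pos alpha_gt_1 by simp
  show ?thesis
  proof (cases "u \<le> 1")
    case True
    have "h 1 - h u \<le> (1 - u) * 0"
      using True u by (intro increment_le_if_deriv_le[where f'=dh] h_has_derivative)
        (auto intro!: less_imp_le[OF dh_neg])
    then show ?thesis
      using h_1 by simp
  qed (use h_eq_powr K_pos alpha_gt_1 in simp)
qed

lemma g_decreasing:
  assumes "0 \<le> u" "u < v"
  shows "g v < g u"
  using assms(2)
proof (rule DERIV_neg_imp_decreasing)
  fix x
  assume "u \<le> x"
  with assms(1) show "\<exists>d. (g has_real_derivative d) (at x) \<and> d < 0"
    using g_has_derivative dg_neg[of x] by auto
qed

lemma g_tendsto_0: "(g \<longlongrightarrow> 0) at_top"
proof -
  have "((\<lambda>u. u powr (- \<alpha>)) \<longlongrightarrow> 0) at_top"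
    using alpha_gt_1 by (intro tendsto_neg_powr filterlim_ident) auto
  moreover have "\<forall>\<^sub>F u in at_top. u powr (- \<alpha>) = g u"
    using eventually_ge_at_top[of 1] by eventually_elim (simp add: g_eq_powr)
  ultimately show ?thesis
    by (rule Lim_transform_eventually)
qed

lemma inj_on_g: "inj_on g {0<..}"
proof (rule linorder_inj_onI')
  fix i j :: real
  assume "i \<in> {0<..}" "i < j"
  then show "g i \<noteq> g j"
    using g_decreasing[of i j] by auto
qed

lemma g_image: "g ` {0<..} = {0<..<g 0}"
proof
  show "g ` {0<..} \<subseteq> {0<..<g 0}"
    using g_pos g_decreasing[of 0] by (auto simp: less_imp_le)
next
  show "{0<..<g 0} \<subseteq> g ` {0<..}"
  proof
    fix y
    assume y: "y \<in> {0<..<g 0}"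
    then obtain U where U: "\<And>u. u \<ge> U \<Longrightarrow> g u < y"
      using order_tendstoD(2)[OF g_tendsto_0, of y] by (auto simp: eventually_at_top_linorder)
    define V where "V = max U 0"
    have "g V \<le> y" "V \<ge> 0"
      using U[of V] by (auto simp: V_def)
    moreover have "\<forall>x. 0 \<le> x \<and> x \<le> V \<longrightarrow> isCont g x"
      using g_has_derivative DERIV_isCont by blast
    ultimately obtain x where "0 \<le> x" "g x = y"
      using IVT2[of g V y 0] y by auto
    moreover have "x \<noteq> 0"
      using y \<open>g x = y\<close> by auto
    ultimately show "y \<in> g ` {0<..}"
      by auto
  qed
qed

definition g_inv :: "real \<Rightarrow> real" where
  "g_inv = the_inv_into {0<..} g"

lemma g_inv_g: "u > 0 \<Longrightarrow> g_inv (g u) = u"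
  unfolding g_inv_def by (rule the_inv_into_f_f[OF inj_on_g]) simp

lemma
  assumes "y \<in> {0<..<g 0}"
  shows g_inv_pos: "g_inv y > 0" and g_g_inv: "g (g_inv y) = y"
  using the_inv_into_into[OF inj_on_g, of y "{0<..}"] f_the_inv_into_f[OF inj_on_g, of y] assms
  by (simp_all add: g_inv_def g_image)

lemma g_inv_has_derivative:
  assumes y: "y \<in> {0<..<g 0}"
  shows "(g_inv has_real_derivative inverse (dg (g_inv y))) (at y)"
proof -
  define u where "u = g_inv y"
  have u: "u > 0" "g u = y"
    using g_inv_pos[OF y] g_g_inv[OF y] by (simp_all add: u_def)
  have "isCont g_inv (g u)"
  proof (rule isCont_inverse_function[where f=g and x=u and d="u/2"])
    fix z
    assume "\<bar>z - u\<bar> \<le> u/2"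
    then have "z > 0"
      using u(1) abs_le_D2[of "z - u" "u/2"] by linarith
    then show "g_inv (g z) = z"
      by (rule g_inv_g)
  next
    show "isCont g z" for z
      using g_has_derivative DERIV_isCont by blast
  qed (use u in simp)
  then have "isCont g_inv y"
    using u by simp
  moreover have "dg u \<noteq> 0"
    using dg_neg[of u] u by simp
  ultimately show ?thesis
    unfolding u_def using y g_g_inv
    by (intro DERIV_inverse_function[where f=g and a=0 and b="g 0", OF g_has_derivative]) auto
qed

lemma Ck_on_g_inv: "Ck_on k {0<..<g 0} g_inv"
proof (induction k)
  case (Suc k)
  have dg: "Ck_on k UNIV dg"
    using Ck_on_g[of "Suc k"] by (simp add: deriv_g)
  have "Ck_on k {0<..<g 0} (\<lambda>y. dg (g_inv y))"
    by (rule Ck_on_compose[OF _ _ dg Suc.IH]) (use g_inv_pos in auto)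
  then have "Ck_on k {0<..<g 0} (\<lambda>y. inverse (dg (g_inv y)))"
    using g_inv_pos dg_neg by (intro Ck_on_inverse) (auto simp: less_le)
  then show ?case
    by (intro Ck_on_SucI[where f'="\<lambda>y. inverse (dg (g_inv y))"] g_inv_has_derivative) auto
qed simp

definition eos :: "real \<Rightarrow> real" where
  "eos x = h (g_inv x)"

lemma Ck_on_eos: "Ck_on k {0<..<g 0} eos"
  unfolding eos_def[abs_def] by (rule Ck_on_compose[OF _ _ Ck_on_h Ck_on_g_inv]) auto

lemma deriv_eos_pos:
  assumes x: "x \<in> {0<..<g 0}"
  shows "deriv eos x > 0"
proof -
  have "(eos has_real_derivative dh (g_inv x) * inverse (dg (g_inv x))) (at x)"
    unfolding eos_def[abs_def] by (rule DERIV_chain2[OF h_has_derivative g_inv_has_derivative[OF x]])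
  moreover have "dh (g_inv x) * inverse (dg (g_inv x)) > 0"
    using dh_neg dg_neg g_inv_pos[OF x] by (simp add: mult_neg_neg less_imp_le)
  ultimately show ?thesis
    using DERIV_imp_deriv by metis
qed

lemma eos_g: "u > 0 \<Longrightarrow> eos (g u) = h u"
  by (simp add: eos_def g_inv_g)

lemma eos_eq_powr:
  assumes "0 < x" "x < g 1"
  shows "eos x = 4 * pi * (n - 1)^2 / (2 * (n + 1) * (n - 3)) * x powr ((n + 1) / n)"
proof -
  have x: "x \<in> {0<..<g 0}"
    using assms g_decreasing[of 0 1] by simp
  define u where "u = g_inv x"
  have u: "u > 0" "g u = x"
    using g_inv_pos[OF x] g_g_inv[OF x] by (simp_all add: u_def)
  have "u > 1"
  proof (rule ccontr)
    assume "\<not> u > 1"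
    then have "g 1 \<le> g u"
      using g_decreasing[of u 1] u(1) by (cases "u = 1") auto
    then show False
      using u(2) assms(2) by simp
  qed
  then have "x powr ((n + 1) / n) = u powr (- \<alpha> * ((n + 1) / n))"
    unfolding u(2)[symmetric] by (simp add: g_eq_powr powr_powr)
  also have "- \<alpha> * ((n + 1) / n) = 1 - 2 * \<alpha>"
    using n_gt_3 by (simp add: \<alpha>_def field_simps)
  moreover have "K / (2 * (2 * \<alpha> - 1)) = 4 * pi * (n - 1)^2 / (2 * (n + 1) * (n - 3))"
    using n_gt_3 by (simp add: K_def \<alpha>_def field_simps power2_eq_square)
  ultimately show ?thesis
    using h_eq_powr[of u] \<open>u > 1\<close> by (simp add: eos_def u_def[symmetric])
qed

definition rho :: "real \<Rightarrow> real" where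
  "rho r = g (r^2)"

definition p :: "real \<Rightarrow> real" where
  "p r = h (r^2)"

lemma rho_has_derivative: "(rho has_real_derivative dg (r^2) * (2 * r)) (at r)"
  unfolding rho_def[abs_def] by (rule DERIV_chain2[OF g_has_derivative]) (auto intro!: derivative_eq_intros)

lemma deriv_rho: "deriv rho = (\<lambda>r. dg (r^2) * (2 * r))"
  using rho_has_derivative DERIV_imp_deriv by blast

lemma deriv2_rho_0: "deriv (deriv rho) 0 = 2 * dg 0"
proof -
  have "dg differentiable (at 0)"
    using Ck_on_g[of "Suc (Suc 0)"] by (simp add: deriv_g)
  then obtain D where "(dg has_real_derivative D) (at (0^2))"
    by (auto simp: real_differentiable_def)
  then have "((\<lambda>r. dg (r^2)) has_real_derivative D * (2 * 0)) (at 0)"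
    by (rule DERIV_chain2) (auto intro!: derivative_eq_intros)
  then have "((\<lambda>r. dg (r^2) * (2 * r)) has_real_derivative D * (2 * 0) * (2 * 0) + 2 * dg (0^2)) (at 0)"
    by (rule DERIV_mult) (auto intro!: derivative_eq_intros)
  then show ?thesis
    unfolding deriv_rho by (simp add: DERIV_imp_deriv)
qed

lemma rho_eq_powr: "r > 1 \<Longrightarrow> rho r = r powr (- 2 * n / (n - 1))"
  using g_eq_powr[of "r^2"] power2_powr[of r "- \<alpha>"] by (simp add: rho_def \<alpha>_def one_le_power)

lemma mass_rho: "s \<ge> 0 \<Longrightarrow> mass rho s = s^3 * mu (s^2)"
proof -
  assume s: "s \<ge> 0"
  have "((\<lambda>t. t^2 * rho t) has_integral (s^3 * mu (s^2) / (4 * pi) - 0^3 * mu (0^2) / (4 * pi))) {0..s}"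
  proof (rule fundamental_theorem_of_calculus_real[OF s])
    fix x :: real
    have "((\<lambda>t. mu (t^2)) has_real_derivative dmu (x^2) * (2 * x)) (at x)"
      by (rule DERIV_chain2[OF mu_has_derivative]) (auto intro!: derivative_eq_intros)
    then have "((\<lambda>t. t^3 * mu (t^2) / (4 * pi)) has_real_derivative
        (3 * x^2 * mu (x^2) + dmu (x^2) * (2 * x) * x^3) / (4 * pi)) (at x)"
      by (intro DERIV_cdivide DERIV_mult) (auto intro!: derivative_eq_intros)
    then show "((\<lambda>t. t^3 * mu (t^2) / (4 * pi)) has_real_derivative x^2 * rho x) (at x)"
      by (simp add: rho_def g_def power2_eq_square power3_eq_cube add_divide_distrib algebra_simps)
  qed
  then show ?thesis
    by (simp add: mass_def integral_unique)
qed

lemma mass_eq_powr: "r > 1 \<Longrightarrow> mass rho r = K * r powr ((n - 3) / (n - 1))"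
proof -
  assume r: "r > 1"
  have "mass rho r = r powr 3 * (K * r powr (2 * (- \<alpha>)))"
    using r mass_rho[of r] mu_eq_powr[of "r^2"] power2_powr[of r] by (simp add: one_le_power powr_realpow)
  also have "\<dots> = K * r powr (3 + 2 * (- \<alpha>))"
    by (metis powr_add mult.left_commute)
  also have "3 + 2 * (- \<alpha>) = (n - 3) / (n - 1)"
    using n_gt_3 by (simp add: \<alpha>_def field_simps)
  finally show ?thesis .
qed

lemma mass_tendsto_at_top: "filterlim (mass rho) at_top at_top"
proof -
  have "filterlim (\<lambda>r. K * r powr ((n - 3) / (n - 1))) at_top at_top"
    using K_pos n_gt_3 by (intro filterlim_tendsto_pos_mult_at_top[OF tendsto_const] powr_tendsto_at_top) auto
  moreover have "\<forall>\<^sub>F r in at_top. K * r powr ((n - 3) / (n - 1)) = mass rho r"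
    using eventually_gt_at_top[of 1] by eventually_elim (simp add: mass_eq_powr)
  ultimately show ?thesis
    by (rule filterlim_cong[OF refl refl, THEN iffD1, rotated])
qed

text \<open>At \<open>s = 0\<close> both sides vanish, the right one because division by 0 yields 0.\<close>

lemma p_has_derivative: "s \<ge> 0 \<Longrightarrow> (p has_real_derivative - rho s * mass rho s / s^2) (at s)"
proof -
  assume s: "s \<ge> 0"
  have "(p has_real_derivative dh (s^2) * (2 * s)) (at s)"
    unfolding p_def[abs_def] by (rule DERIV_chain2[OF h_has_derivative]) (auto intro!: derivative_eq_intros)
  moreover have "dh (s^2) * (2 * s) = - rho s * mass rho s / s^2"
    using s by (cases "s = 0") (simp_all add: dh_def rho_def mass_rho power2_eq_square power3_eq_cube)
  ultimately show ?thesis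
    by simp
qed

lemma p_tendsto_0: "(p \<longlongrightarrow> 0) at_top"
proof -
  have "((\<lambda>u. K / (2 * (2 * \<alpha> - 1)) * u powr (1 - 2 * \<alpha>)) \<longlongrightarrow> K / (2 * (2 * \<alpha> - 1)) * 0) at_top"
    using alpha_gt_1 by (intro tendsto_mult tendsto_const tendsto_neg_powr filterlim_ident) auto
  moreover have "\<forall>\<^sub>F u in at_top. K / (2 * (2 * \<alpha> - 1)) * u powr (1 - 2 * \<alpha>) = h u"
    using eventually_ge_at_top[of 1] by eventually_elim (simp add: h_eq_powr)
  ultimately have "(h \<longlongrightarrow> 0) at_top"
    by (simp add: Lim_transform_eventually)
  then show ?thesis
    unfolding p_def[abs_def] by (rule filterlim_compose) (intro filterlim_pow_at_top filterlim_ident, simp)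
qed

lemma p_has_integral:
  assumes r: "r \<ge> 0"
  shows "((\<lambda>s. mass rho s * rho s / s^2) has_integral p r) {r..}"
proof (rule has_integral_to_inf)
  let ?f = "\<lambda>s. mass rho s * rho s / s^2"
  have f_has_integral: "(?f has_integral (p r - p y)) {r..y}" if "r \<le> y" for y
  proof -
    have "(?f has_integral (- p y - (- p r))) {r..y}"
    proof (rule fundamental_theorem_of_calculus_real[OF that])
      fix s
      assume "r \<le> s"
      then have "((\<lambda>s. - p s) has_real_derivative - (- rho s * mass rho s / s^2)) (at s)"
        using r by (intro DERIV_minus p_has_derivative) simp
      then show "((\<lambda>s. - p s) has_real_derivative ?f s) (at s)"
        by (simp add: mult.commute)
    qed
    then show ?thesis
      by simp
  qed
  show "?f integrable_on {r..y}" for y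
    using f_has_integral[of y] by (cases "r \<le> y") (auto simp: integrable_on_def)
  have "((\<lambda>y. p r - p y) \<longlongrightarrow> p r - 0) at_top"
    by (intro tendsto_diff tendsto_const p_tendsto_0)
  moreover have "\<forall>\<^sub>F y in at_top. p r - p y = integral {r..y} ?f"
    using eventually_ge_at_top[of r] by eventually_elim (rule integral_unique[OF f_has_integral, symmetric])
  ultimately show "((\<lambda>y. integral {r..y} ?f) \<longlongrightarrow> p r) at_top"
    by (simp add: Lim_transform_eventually)
  show "?f s \<ge> 0" if "s \<ge> r" for s
    using that r g_pos[of "s^2"] mu_pos[of "s^2"] by (simp add: mass_rho rho_def)
qed

end

theorem mainTheorem6:
  fixes n :: real
  assumes "n > 3"
  shows "\<exists>rho p :: real \<Rightarrow> real.
     (\<forall>r\<ge>0. rho r > 0 \<and> p r > 0) \<and>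
     (\<exists>g h. smooth_on UNIV g \<and> smooth_on UNIV h \<and>
            (\<forall>r. rho r = g (r^2) \<and> p r = h (r^2))) \<and>
     (\<forall>r>0. deriv rho r < 0) \<and> deriv (deriv rho) 0 < 0 \<and>
     (\<forall>r>1. rho r = r powr (- 2 * n / (n - 1))) \<and>
     (\<forall>r\<ge>0. ((\<lambda>s. mass rho s * rho s / s^2) has_integral p r) {r..}) \<and>
     (\<forall>r>0. (p has_real_derivative (- rho r * mass rho r / r^2)) (at r)) \<and>
     (\<exists>F. smooth_on {0<..<rho 0} F \<and> (\<forall>x\<in>{0<..<rho 0}. deriv F x > 0) \<and>
          (\<forall>r>0. p r = F (rho r)) \<and>
          (\<forall>x. 0 < x \<and> x < rho 1 \<longrightarrow>
               F x = 4 * pi * (n - 1)^2 / (2 * (n + 1) * (n - 3)) * x powr ((n + 1) / n))) \<and>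
     (\<forall>r>1. mass rho r = 4 * pi * (n - 1) / (n - 3) * r powr ((n - 3) / (n - 1))) \<and>
     filterlim (mass rho) at_top at_top"
proof -
  interpret polytrope n
    using assms by unfold_locales
  have "\<exists>g h. smooth_on UNIV g \<and> smooth_on UNIV h \<and> (\<forall>r. rho r = g (r^2) \<and> p r = h (r^2))"
    using Ck_on_g Ck_on_h
    by (intro exI[of _ g] exI[of _ h] conjI smooth_on_if_Ck_on) (simp_all add: rho_def p_def)
  moreover have "\<exists>F. smooth_on {0<..<rho 0} F \<and> (\<forall>x\<in>{0<..<rho 0}. deriv F x > 0) \<and>
      (\<forall>r>0. p r = F (rho r)) \<and>
      (\<forall>x. 0 < x \<and> x < rho 1 \<longrightarrow>
        F x = 4 * pi * (n - 1)^2 / (2 * (n + 1) * (n - 3)) * x powr ((n + 1) / n))"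
    using Ck_on_eos deriv_eos_pos eos_g eos_eq_powr
    by (intro exI[of _ eos] conjI smooth_on_if_Ck_on) (simp_all add: rho_def p_def)
  moreover have "\<forall>r\<ge>0. rho r > 0 \<and> p r > 0"
    using g_pos h_pos by (simp add: rho_def p_def)
  moreover have "\<forall>r>0. deriv rho r < 0"
    using dg_neg by (simp add: deriv_rho mult_neg_pos)
  moreover have "deriv (deriv rho) 0 < 0"
    using dg_neg[of 0] by (simp add: deriv2_rho_0)
  moreover have "\<forall>r>1. mass rho r = 4 * pi * (n - 1) / (n - 3) * r powr ((n - 3) / (n - 1))"
    using mass_eq_powr by (simp add: K_def)
  ultimately show ?thesis
    using rho_eq_powr p_has_integral p_has_derivative mass_tendsto_at_top
    by - (rule exI[of _ rho], rule exI[of _ p], auto)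
qed

end
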